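(* Let $E_1,E_2,E_3,H_1,H_2,H_3$ be logically independent events with $H_i\ne\emptyset$, let $(x_1,x_2,x_3)\in[0,1]^3$, and let $$\mathcal M=(x_1,x_2,x_3,T_L(x_1,x_2),T_L(x_1,x_3),T_L(x_2,x_3),T_L(x_1,x_2,x_3))$$ be a prevision assessment on $\mathcal F=\{\mathscr C_1,\mathscr C_2,\mathscr C_3,\mathscr C_{12},\mathscr C_{13},\mathscr C_{23},\mathscr C_{123}\}$, where $T_L(x_i,x_j)=\max\{x_i+x_j-1,0\}$ and $T_L(x_1,x_2,x_3)=\max\{x_1+x_2+x_3-2,0\}$. (i) If $x_1+x_2+x_3-2\ge0$, then $\mathcal M$ is coherent. (ii) If $x_1+x_2-1>0$, $x_1+x_3-1>0$, $x_2+x_3-1>0$ and $x_1+x_2+x_3-2<0$, then $\mathcal M$ is not coherent.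
   Context: Events are identified with their indicators; $\bar E$ is the negation of $E$. For $H\ne\emptyset$ the conditional event $E|H$ is true if $EH$ is true, false if $\bar EH$ is true, void if $\bar H$ is true; with $P(E|H)=x$ it is identified with the random quantity $EH+x\bar H$, and a conditional random quantity $X|H$ with prevision $\mu$ with $XH+\mu\bar H$. Coherence (de Finetti): an assessment $(\mu_1,\dots,\mu_m)$ on $\{X_1|H_1,\dots,X_m|H_m\}$ is coherent iff for all real stakes $s_i$ the gain $G=\sum_is_iH_i(X_i-\mu_i)$, restricted to $H_1\vee\dots\vee H_m$, satisfies $\min G\le0\le\max G$. Logical independence: all conjunctions of the listed events or their negations are nonempty. Notation: $\mathscr C_i=E_i|H_i$, $\mathscr C_{ij}=(E_i|H_i)\wedge(E_j|H_j)$, $\mathscr C_{123}=(E_1|H_1)\wedge(E_2|H_2)\wedge(E_3|H_3)$, with previsions $x_i,x_{ij},x_{123}$ in the order of $\mathcal F$. Conjunction of two: $\mathscr C_{ij}$ equals $1$ if $E_iH_iE_jH_j$ true, $0$ if $\bar E_iH_i\vee\bar E_jH_j$ true, $x_i$ if $\bar H_iE_jH_j$ true, $x_j$ if $\bar H_jE_iH_i$ true, $x_{ij}$ if $\bar H_i\bar H_j$ true. $\mathscr C_{123}$ equals $1$ if $E_1H_1E_2H_2E_3H_3$ true; $0$ if $\bar E_1H_1\vee\bar E_2H_2\vee\bar E_3H_3$ true; $x_1$, $x_2$, $x_3$ if respectively $\bar H_1E_2H_2E_3H_3$, $\bar H_2E_1H_1E_3H_3$, $\bar H_3E_1H_1E_2H_2$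 true; $x_{12}$, $x_{13}$, $x_{23}$ if respectively $\bar H_1\bar H_2E_3H_3$, $\bar H_1\bar H_3E_2H_2$, $\bar H_2\bar H_3E_1H_1$ true; $x_{123}$ if $\bar H_1\bar H_2\bar H_3$ true. *)

theory Defs
  imports Complex_Main "HOL-Library.Indicator_Function"
begin

text \<open>Sample space: the universe of type 'w; events are sets of states.
  A conditional random quantity X|K is a pair (X, K) where X is the value
  of the quantity on the states where the conditioning event K is true.\<close>

definition logically_independent :: "'w set list \<Rightarrow> bool" where
  "logically_independent As \<longleftrightarrow>
     (\<forall>b :: nat \<Rightarrow> bool. \<exists>w. \<forall>i < length As. (w \<in> As ! i) = b i)"

definition coherent :: "(('w \<Rightarrow> real) \<times> 'w set) list \<Rightarrow> real list \<Rightarrow> bool" where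
  "coherent F mu \<longleftrightarrow> length mu = length F \<and>
     (\<forall>s :: nat \<Rightarrow> real.
        let G = (\<lambda>w. \<Sum>k<length F. s k * indicator (snd (F ! k)) w * (fst (F ! k) w - mu ! k));
            U = \<Union> (snd ` set F)
        in (\<exists>w\<in>U. G w \<le> 0) \<and> (\<exists>w\<in>U. 0 \<le> G w))"

definition cond_event :: "'w set \<Rightarrow> 'w set \<Rightarrow> ('w \<Rightarrow> real) \<times> 'w set" where
  "cond_event E H = (indicator E, H)"

text \<open>Conjunction (E_i|H_i) and (E_j|H_j), given x_i = P(E_i|H_i), x_j = P(E_j|H_j),
  with conditioning event H_i or H_j.\<close>
definition conj2 :: "'w set \<Rightarrow> 'w set \<Rightarrow> 'w set \<Rightarrow> 'w set \<Rightarrow> real \<Rightarrow> real \<Rightarrow> ('w \<Rightarrow> real) \<times> 'w set" where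
  "conj2 Ei Hi Ej Hj xi xj =
     ((\<lambda>w. if w \<in> Ei \<inter> Hi \<inter> Ej \<inter> Hj then 1
           else if w \<in> (-Ei \<inter> Hi) \<union> (-Ej \<inter> Hj) then 0
           else if w \<notin> Hi \<and> w \<in> Ej \<inter> Hj then xi
           else if w \<notin> Hj \<and> w \<in> Ei \<inter> Hi then xj
           else 0),
      Hi \<union> Hj)"

text \<open>Conjunction of three conditional events, given the previsions
  x1,x2,x3 of the single events and x12,x13,x23 of the pairwise conjunctions;
  conditioning event H1 or H2 or H3.\<close>
definition conj3 :: "'w set \<Rightarrow> 'w set \<Rightarrow> 'w set \<Rightarrow> 'w set \<Rightarrow> 'w set \<Rightarrow> 'w set \<Rightarrow>
    real \<Rightarrow> real \<Rightarrow> real \<Rightarrow> real \<Rightarrow> real \<Rightarrow> real \<Rightarrow> ('w \<Rightarrow> real) \<times> 'w set" where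
  "conj3 E1 H1 E2 H2 E3 H3 x1 x2 x3 x12 x13 x23 =
     ((\<lambda>w. if w \<in> E1 \<inter> H1 \<inter> E2 \<inter> H2 \<inter> E3 \<inter> H3 then 1
           else if w \<in> (-E1 \<inter> H1) \<union> (-E2 \<inter> H2) \<union> (-E3 \<inter> H3) then 0
           else if w \<notin> H1 \<and> w \<in> E2 \<inter> H2 \<inter> E3 \<inter> H3 then x1
           else if w \<notin> H2 \<and> w \<in> E1 \<inter> H1 \<inter> E3 \<inter> H3 then x2
           else if w \<notin> H3 \<and> w \<in> E1 \<inter> H1 \<inter> E2 \<inter> H2 then x3
           else if w \<notin> H1 \<and> w \<notin> H2 \<and> w \<in> E3 \<inter> H3 then x12
           else if w \<notin> H1 \<and> w \<notin> H3 \<and> w \<in> E2 \<inter> H2 then x13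
           else if w \<notin> H2 \<and> w \<notin> H3 \<and> w \<in> E1 \<inter> H1 then x23
           else 0),
      H1 \<union> H2 \<union> H3)"

definition TL2 :: "real \<Rightarrow> real \<Rightarrow> real" where
  "TL2 a b = max (a + b - 1) 0"

definition TL3 :: "real \<Rightarrow> real \<Rightarrow> real \<Rightarrow> real" where
  "TL3 a b c = max (a + b + c - 2) 0"

definition assessM :: "real \<Rightarrow> real \<Rightarrow> real \<Rightarrow> real list" where
  "assessM x1 x2 x3 = [x1, x2, x3, TL2 x1 x2, TL2 x1 x3, TL2 x2 x3, TL3 x1 x2 x3]"

definition familyF :: "'w set \<Rightarrow> 'w set \<Rightarrow> 'w set \<Rightarrow> 'w set \<Rightarrow> 'w set \<Rightarrow> 'w set \<Rightarrow>
    real \<Rightarrow> real \<Rightarrow> real \<Rightarrow> (('w \<Rightarrow> real) \<times> 'w set) list" where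
  "familyF E1 E2 E3 H1 H2 H3 x1 x2 x3 =
     [cond_event E1 H1, cond_event E2 H2, cond_event E3 H3,
      conj2 E1 H1 E2 H2 x1 x2, conj2 E1 H1 E3 H3 x1 x3, conj2 E2 H2 E3 H3 x2 x3,
      conj3 E1 H1 E2 H2 E3 H3 x1 x2 x3 (TL2 x1 x2) (TL2 x1 x3) (TL2 x2 x3)]"

end

theory Submission
  imports Defs
begin

text \<open>If \<open>x\<^sub>1 + x\<^sub>2 + x\<^sub>3 \<ge> 2\<close>, the assessment is the prevision of the probability
  putting mass \<open>x\<^sub>1 + x\<^sub>2 + x\<^sub>3 - 2\<close> on the constituent \<open>E\<^sub>1E\<^sub>2E\<^sub>3H\<^sub>1H\<^sub>2H\<^sub>3\<close> and mass
  \<open>1 - x\<^sub>i\<close> on the constituent where only \<open>E\<^sub>i\<close> fails (all inside \<open>H\<^sub>1H\<^sub>2H\<^sub>3\<close>); every gain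
  averages to 0 under it and hence takes both signs. If instead all pairwise values are
  \<open>x\<^sub>i + x\<^sub>j - 1 > 0\<close> but the triple value is 0, the inclusion-exclusion stakes
  \<open>-1, -1, -1, 1, 1, 1, -1\<close> yield a sure gain of at least \<open>2 - x\<^sub>1 - x\<^sub>2 - x\<^sub>3 > 0\<close>: on
  \<open>H\<^sub>1H\<^sub>2H\<^sub>3\<close> the random part is minus the indicator of \<open>E\<^sub>1 \<or> E\<^sub>2 \<or> E\<^sub>3\<close>.\<close>

definition bet_gain :: "('w \<Rightarrow> real) \<times> 'w set \<Rightarrow> real \<Rightarrow> 'w \<Rightarrow> real" where
  "bet_gain XH m w = indicator (snd XH) w * (fst XH w - m)"

definition gain :: "(('w \<Rightarrow> real) \<times> 'w set) list \<Rightarrow> real list \<Rightarrow> (nat \<Rightarrow> real) \<Rightarrow> 'w \<Rightarrow> real" where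
  "gain F mu s w = (\<Sum>k<length F. s k * bet_gain (F ! k) (mu ! k) w)"

lemma coherent_iff_gain:
  "coherent F mu \<longleftrightarrow> length mu = length F \<and>
     (\<forall>s. (\<exists>w\<in>\<Union> (snd ` set F). gain F mu s w \<le> 0) \<and> (\<exists>w\<in>\<Union> (snd ` set F). 0 \<le> gain F mu s w))"
  by (simp add: coherent_def gain_def bet_gain_def Let_def mult.assoc)

lemma not_coherent_if_gain_pos:
  assumes "\<And>w. w \<in> \<Union> (snd ` set F) \<Longrightarrow> gain F mu s w > 0"
  shows "\<not> coherent F mu"
proof
  assume "coherent F mu"
  then obtain w where "w \<in> \<Union> (snd ` set F)" "gain F mu s w \<le> 0"
    unfolding coherent_iff_gain by blast
  with assms show False by fastforce
qed

lemma convex_combination_zero_signs: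
  fixes p a :: "'j \<Rightarrow> real"
  assumes "finite J" "\<And>j. j \<in> J \<Longrightarrow> p j \<ge> 0" "sum p J = 1" "(\<Sum>j\<in>J. p j * a j) = 0"
  shows "\<exists>j\<in>J. a j \<le> 0"
proof (rule ccontr)
  assume "\<not> (\<exists>j\<in>J. a j \<le> 0)"
  then have pos: "\<And>j. j \<in> J \<Longrightarrow> a j > 0" by auto
  have "\<forall>j\<in>J. p j * a j = 0"
    using assms(1,4) sum_nonneg_eq_0_iff[of J "\<lambda>j. p j * a j"] assms(2) pos
    by (simp add: less_imp_le)
  then have "\<forall>j\<in>J. p j = 0" using pos by (metis less_irrefl mult_eq_0_iff)
  then show False using assms(3) by simp
qed

text \<open>Averaging the gain against the distribution \<open>p\<close> gives 0, so the gain takes both signs.\<close>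
lemma coherent_if_prevision_of_distribution:
  fixes p :: "'j \<Rightarrow> real" and w :: "'j \<Rightarrow> 'w"
  assumes "length mu = length F" "finite J" "\<And>j. j \<in> J \<Longrightarrow> p j \<ge> 0" "sum p J = 1"
    and "w ` J \<subseteq> \<Union> (snd ` set F)"
    and "\<And>k. k < length F \<Longrightarrow>
           (\<Sum>j\<in>J. p j * bet_gain (F ! k) (mu ! k) (w j)) = 0"
  shows "coherent F mu"
  unfolding coherent_iff_gain
proof (rule conjI[OF assms(1)], rule allI)
  fix s
  have "(\<Sum>j\<in>J. p j * gain F mu s (w j))
      = (\<Sum>k<length F. s k * (\<Sum>j\<in>J. p j * bet_gain (F ! k) (mu ! k) (w j)))"
    unfolding gain_def sum_distrib_left by (subst sum.swap) (simp add: ac_simps)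
  also have "\<dots> = 0" using assms(6) by simp
  finally have avg: "(\<Sum>j\<in>J. p j * gain F mu s (w j)) = 0" .
  have avg_neg: "(\<Sum>j\<in>J. p j * - gain F mu s (w j)) = 0" using avg by (simp add: sum_negf)
  obtain j where "j \<in> J" "gain F mu s (w j) \<le> 0"
    using convex_combination_zero_signs[OF assms(2-4) avg] by blast
  moreover obtain i where "i \<in> J" "0 \<le> gain F mu s (w i)"
    using convex_combination_zero_signs[OF assms(2-4) avg_neg] by auto
  ultimately show "(\<exists>v\<in>\<Union> (snd ` set F). gain F mu s v \<le> 0) \<and>
                  (\<exists>v\<in>\<Union> (snd ` set F). 0 \<le> gain F mu s v)"
    using assms(5) by blast
qed

lemma conditioning_union_familyF:
  "\<Union> (snd ` set (familyF E1 E2 E3 H1 H2 H3 x1 x2 x3)) = H1 \<union> H2 \<union> H3"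
  by (auto simp: familyF_def cond_event_def conj2_def conj3_def)

lemma logically_independent_constituent:
  assumes "logically_independent [E1, E2, E3, H1, H2, H3]"
  obtains w where "w \<in> E1 \<longleftrightarrow> e1" "w \<in> E2 \<longleftrightarrow> e2" "w \<in> E3 \<longleftrightarrow> e3"
    "w \<in> H1" "w \<in> H2" "w \<in> H3"
proof -
  obtain w where w: "\<forall>i < length [E1, E2, E3, H1, H2, H3].
          (w \<in> [E1, E2, E3, H1, H2, H3] ! i) = [e1, e2, e3, True, True, True] ! i"
    using assms unfolding logically_independent_def by blast
  show thesis
    using that w[rule_format, of 0] w[rule_format, of 1] w[rule_format, of 2]
      w[rule_format, of 3] w[rule_format, of 4] w[rule_format, of 5]
    by simp
qed

lemma gain_familyF:
  "gain (familyF E1 E2 E3 H1 H2 H3 x1 x2 x3) [m1, m2, m3, m12, m13, m23, m123] s w =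
     s 0 * bet_gain (cond_event E1 H1) m1 w + s 1 * bet_gain (cond_event E2 H2) m2 w
     + s 2 * bet_gain (cond_event E3 H3) m3 w
     + s 3 * bet_gain (conj2 E1 H1 E2 H2 x1 x2) m12 w
     + s 4 * bet_gain (conj2 E1 H1 E3 H3 x1 x3) m13 w
     + s 5 * bet_gain (conj2 E2 H2 E3 H3 x2 x3) m23 w
     + s 6 * bet_gain (conj3 E1 H1 E2 H2 E3 H3 x1 x2 x3 (TL2 x1 x2) (TL2 x1 x3) (TL2 x2 x3)) m123 w"
  by (simp add: gain_def familyF_def eval_nat_numeral)

lemma gain_inclusion_exclusion_lower_bound:
  fixes x1 x2 x3 :: real
  assumes "w \<in> H1 \<union> H2 \<union> H3" "x1 \<in> {0..1}" "x2 \<in> {0..1}" "x3 \<in> {0..1}"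
    and "x1 + x2 > 1" "x1 + x3 > 1" "x2 + x3 > 1"
  shows "gain (familyF E1 E2 E3 H1 H2 H3 x1 x2 x3) (assessM x1 x2 x3)
           (\<lambda>k. [-1, -1, -1, 1, 1, 1, -1] ! k) w \<ge> 2 - x1 - x2 - x3"
proof -
  have tl: "TL2 x1 x2 = x1 + x2 - 1" "TL2 x1 x3 = x1 + x3 - 1" "TL2 x2 x3 = x2 + x3 - 1"
    using assms(5-7) by (simp_all add: TL2_def)
  have "TL3 x1 x2 x3 \<ge> 0" by (simp add: TL3_def)
  with assms(1-4) show ?thesis
    unfolding assessM_def gain_familyF tl
    by (cases "w \<in> E1"; cases "w \<in> E2"; cases "w \<in> E3"; cases "w \<in> H1"; cases "w \<in> H2"; cases "w \<in> H3")
      (simp_all add: bet_gain_def cond_event_def conj2_def conj3_def)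
qed

lemma coherent_familyF_if_sum_ge_2:
  fixes x1 x2 x3 :: real
  assumes "logically_independent [E1, E2, E3, H1, H2, H3]"
    and "x1 \<in> {0..1}" "x2 \<in> {0..1}" "x3 \<in> {0..1}" "x1 + x2 + x3 \<ge> 2"
  shows "coherent (familyF E1 E2 E3 H1 H2 H3 x1 x2 x3) (assessM x1 x2 x3)"
proof -
  obtain w0 where w0: "w0 \<in> E1" "w0 \<in> E2" "w0 \<in> E3" "w0 \<in> H1" "w0 \<in> H2" "w0 \<in> H3"
    using logically_independent_constituent[OF assms(1), of True True True] by blast
  obtain w1 where w1: "w1 \<notin> E1" "w1 \<in> E2" "w1 \<in> E3" "w1 \<in> H1" "w1 \<in> H2" "w1 \<in> H3"
    using logically_independent_constituent[OF assms(1), of False True True] by blast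
  obtain w2 where w2: "w2 \<in> E1" "w2 \<notin> E2" "w2 \<in> E3" "w2 \<in> H1" "w2 \<in> H2" "w2 \<in> H3"
    using logically_independent_constituent[OF assms(1), of True False True] by blast
  obtain w3 where w3: "w3 \<in> E1" "w3 \<in> E2" "w3 \<notin> E3" "w3 \<in> H1" "w3 \<in> H2" "w3 \<in> H3"
    using logically_independent_constituent[OF assms(1), of True True False] by blast
  have tl: "TL2 x1 x2 = x1 + x2 - 1" "TL2 x1 x3 = x1 + x3 - 1" "TL2 x2 x3 = x2 + x3 - 1"
    "TL3 x1 x2 x3 = x1 + x2 + x3 - 2"
    using assms(2-5) by (auto simp: TL2_def TL3_def)
  define p where "p = (!) [x1 + x2 + x3 - 2, 1 - x1, 1 - x2, 1 - x3]"
  define w where "w = (!) [w0, w1, w2, w3]"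
  show ?thesis
  proof (rule coherent_if_prevision_of_distribution[where J = "{..<4}" and p = p and w = w])
    show "length (assessM x1 x2 x3) = length (familyF E1 E2 E3 H1 H2 H3 x1 x2 x3)"
      by (simp add: assessM_def familyF_def)
    show "p j \<ge> 0" if "j \<in> {..<4}" for j
      using that assms(2-5) by (auto simp: p_def less_Suc_eq numeral_eq_Suc)
    show "sum p {..<4} = 1"
      by (simp add: p_def numeral_eq_Suc)
    show "w ` {..<4} \<subseteq> \<Union> (snd ` set (familyF E1 E2 E3 H1 H2 H3 x1 x2 x3))"
      using w0 w1 w2 w3 by (auto simp: w_def conditioning_union_familyF less_Suc_eq numeral_eq_Suc)
    show "(\<Sum>j<4. p j * bet_gain (familyF E1 E2 E3 H1 H2 H3 x1 x2 x3 ! k) (assessM x1 x2 x3 ! k) (w j)) = 0"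
      if "k < length (familyF E1 E2 E3 H1 H2 H3 x1 x2 x3)" for k
    proof -
      from that have "k \<in> {0, 1, 2, 3, 4, 5, 6}" by (auto simp: familyF_def)
      then show ?thesis
        using w0 w1 w2 w3
        by (auto simp: numeral_eq_Suc p_def w_def familyF_def assessM_def tl bet_gain_def
            cond_event_def conj2_def conj3_def algebra_simps)
    qed
  qed simp
qed

theorem theorem24:
  fixes E1 E2 E3 H1 H2 H3 :: "'w set" and x1 x2 x3 :: real
  assumes "logically_independent [E1, E2, E3, H1, H2, H3]"
    and "H1 \<noteq> {}" "H2 \<noteq> {}" "H3 \<noteq> {}"
    and "x1 \<in> {0..1}" "x2 \<in> {0..1}" "x3 \<in> {0..1}"
  shows "(x1 + x2 + x3 - 2 \<ge> 0 \<longrightarrow>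
           coherent (familyF E1 E2 E3 H1 H2 H3 x1 x2 x3) (assessM x1 x2 x3))
       \<and> (x1 + x2 - 1 > 0 \<and> x1 + x3 - 1 > 0 \<and> x2 + x3 - 1 > 0 \<and> x1 + x2 + x3 - 2 < 0 \<longrightarrow>
           \<not> coherent (familyF E1 E2 E3 H1 H2 H3 x1 x2 x3) (assessM x1 x2 x3))"
  \<comment> \<open>\<open>H\<^sub>i \<noteq> {}\<close> is implied by logical independence and not needed.\<close>
proof (intro conjI impI)
  assume "x1 + x2 + x3 - 2 \<ge> 0"
  then show "coherent (familyF E1 E2 E3 H1 H2 H3 x1 x2 x3) (assessM x1 x2 x3)"
    using coherent_familyF_if_sum_ge_2 assms(1,5-7) by simp
next
  assume x: "x1 + x2 - 1 > 0 \<and> x1 + x3 - 1 > 0 \<and> x2 + x3 - 1 > 0 \<and> x1 + x2 + x3 - 2 < 0"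
  show "\<not> coherent (familyF E1 E2 E3 H1 H2 H3 x1 x2 x3) (assessM x1 x2 x3)"
  proof (rule not_coherent_if_gain_pos)
    fix w
    assume "w \<in> \<Union> (snd ` set (familyF E1 E2 E3 H1 H2 H3 x1 x2 x3))"
    then have "gain (familyF E1 E2 E3 H1 H2 H3 x1 x2 x3) (assessM x1 x2 x3)
                 (\<lambda>k. [-1, -1, -1, 1, 1, 1, -1] ! k) w \<ge> 2 - x1 - x2 - x3"
      using x assms(5-7)
      by (intro gain_inclusion_exclusion_lower_bound) (auto simp: conditioning_union_familyF)
    with x show "gain (familyF E1 E2 E3 H1 H2 H3 x1 x2 x3) (assessM x1 x2 x3)
                 (\<lambda>k. [-1, -1, -1, 1, 1, 1, -1] ! k) w > 0"
      by linarith
  qed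
qed

end
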